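(* Let $n\geqslant 2$ and write points of $\mathbb{R}^n$ as $(x,y)$ with $x\in\mathbb{R}^{n-1}$, $y\in\mathbb{R}$. Suppose a $C^\infty$-smooth function $\varphi(x,y)$ on $\mathbb{R}^n$ satisfies $\Delta\varphi=0$ in $\mathbb{R}^n$ and $\partial_y\varphi(x,0)=0$ for all $x\in\mathbb{R}^{n-1}$. Then the function \[ w(x,y,t)=\frac{1}{\pi}\int_0^{\pi/2}\varphi\big(x,\sqrt{y^2-t^2}\,\sin s\big)\,ds \] is $C^\infty$-smooth on the set $\{(x,y,t)\,:\,x\in\mathbb{R}^{n-1},\ t\in\mathbb{R},\ y>|t|\}$ and satisfies there the wave equation $\partial_t^2 w-\Delta w=0$.
   Context: $\Delta=\sum_{j=1}^{n-1}\partial_{x_j}^2+\partial_y^2$ is the Laplace operator in the variables $(x,y)\in\mathbb{R}^n$. *)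

theory Defs
  imports "HOL-Analysis.Analysis"
begin

definition dirderiv :: "('a::real_normed_vector \<Rightarrow> real) \<Rightarrow> 'a \<Rightarrow> 'a \<Rightarrow> real" where
  "dirderiv f b p = deriv (\<lambda>s. f (p + s *\<^sub>R b)) 0"

fun Ck_on :: "nat \<Rightarrow> 'a::euclidean_space set \<Rightarrow> ('a \<Rightarrow> real) \<Rightarrow> bool" where
  "Ck_on 0 S f = continuous_on S f"
| "Ck_on (Suc k) S f = (continuous_on S f \<and>
     (\<forall>b\<in>Basis. (\<forall>p\<in>S. (\<lambda>s. f (p + s *\<^sub>R b)) differentiable (at 0))
                 \<and> Ck_on k S (dirderiv f b)))"

definition smooth_on :: "'a::euclidean_space set \<Rightarrow> ('a \<Rightarrow> real) \<Rightarrow> bool" where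
  "smooth_on S f = (\<forall>k. Ck_on k S f)"

definition laplacian :: "('a::euclidean_space \<Rightarrow> real) \<Rightarrow> 'a \<Rightarrow> real" where
  "laplacian f p = (\<Sum>b\<in>Basis. dirderiv (dirderiv f b) b p)"

end

theory Submission
  imports Defs
begin

(* Write r = sqrt (y^2 - t^2) and I_k[psi](x, rho) = integral over [0, pi/2] of
   psi (x, rho sin s) sin^k s ds, so that w = I_0[phi](x, r) / pi.  Differentiating under the
   integral sign gives d_x I_k[psi] = I_k[d_x psi] and d_rho I_k[psi] = I_(k+1)[d_y psi], while
   d_y r = y / r and d_t r = -t / r.  Hence finite sums of terms c(y, t) I_k[psi](x, r), with psi
   smooth and c in the algebra generated by y, t and 1 / r, are closed under partial
   differentiation on the wedge |t| < y; this gives the smoothness of w.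

   For the wave equation, (d_t^2 - d_y^2) f(r) = - f''(r) - f'(r) / r for any C^2 function f, and
   Delta_x I_0[phi] = - I_0[d_y^2 phi] because phi is harmonic.  Therefore
   pi (w_tt - Delta w) = I_0[d_y^2 phi] - I_2[d_y^2 phi] - I_1[d_y phi] / r, which vanishes:
   r times it is the integral over [0, pi/2] of the s-derivative of cos s * d_y phi (x, r sin s),
   whose boundary values are killed by cos (pi/2) = 0 and the Neumann condition. *)

section \<open>Partial derivatives on a product with the real line\<close>

lemma smooth_on_imp_continuous_on: "smooth_on S f \<Longrightarrow> continuous_on S f"
  unfolding smooth_on_def by (metis Ck_on.simps(1))

lemma smooth_on_dirderiv: "smooth_on S f \<Longrightarrow> b \<in> Basis \<Longrightarrow> smooth_on S (dirderiv f b)"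
  unfolding smooth_on_def by (metis Ck_on.simps(2))

lemma smooth_on_has_derivative_line:
  assumes "smooth_on S f" "b \<in> Basis" "p + h *\<^sub>R b \<in> S"
  shows "((\<lambda>h. f (p + h *\<^sub>R b)) has_real_derivative dirderiv f b (p + h *\<^sub>R b)) (at h)"
proof -
  have "(\<lambda>s. f ((p + h *\<^sub>R b) + s *\<^sub>R b)) differentiable (at 0)"
    using assms unfolding smooth_on_def by (metis Ck_on.simps(2))
  then have "((\<lambda>s. f ((p + h *\<^sub>R b) + s *\<^sub>R b)) has_real_derivative dirderiv f b (p + h *\<^sub>R b)) (at 0)"
    unfolding dirderiv_def by (simp add: DERIV_deriv_iff_real_differentiable)
  then show ?thesis
    using DERIV_shift[of "\<lambda>h. f (p + h *\<^sub>R b)" _ 0 h] by (simp add: scaleR_add_left add_ac)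
qed

lemma smooth_on_has_derivative_fst:
  fixes \<psi> :: "'a::euclidean_space \<times> real \<Rightarrow> real"
  assumes "smooth_on UNIV \<psi>" "e \<in> Basis"
  shows "((\<lambda>h. \<psi> (x + h *\<^sub>R e, y)) has_real_derivative dirderiv \<psi> (e, 0) (x + h *\<^sub>R e, y)) (at h)"
  using smooth_on_has_derivative_line[OF assms(1), of "(e, 0)" "(x, y)" h] assms(2)
  by (simp add: Basis_prod_def)

lemma smooth_on_has_derivative_snd:
  fixes \<psi> :: "'a::euclidean_space \<times> real \<Rightarrow> real"
  assumes "smooth_on UNIV \<psi>"
  shows "((\<lambda>\<eta>. \<psi> (x, \<eta>)) has_real_derivative dirderiv \<psi> (0, 1) (x, \<eta>)) (at \<eta>)"
  using smooth_on_has_derivative_line[OF assms, of "(0, 1)" "(x, 0)" \<eta>]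
  by (simp add: Basis_prod_def)

lemma dirderiv_snd: "dirderiv f (0, 1) (x, y) = deriv (\<lambda>\<eta>. f (x, \<eta>)) y"
  unfolding dirderiv_def by (subst deriv_shift_0) (simp add: o_def)

lemma dirderiv_snd_snd:
  "dirderiv (dirderiv f (0, 1)) (0, 1) (x, y) = deriv (deriv (\<lambda>\<eta>. f (x, \<eta>))) y"
  by (simp add: dirderiv_snd)

lemma sum_Basis_prod_real:
  "(\<Sum>b\<in>(Basis :: ('a::euclidean_space \<times> real) set). g b) = (\<Sum>e\<in>Basis. g (e, 0)) + g (0, 1)"
  unfolding Basis_prod_def by (subst sum.union_disjoint) (auto simp: sum.reindex inj_on_def)

lemma laplacian_prod_real:
  fixes f :: "'a::euclidean_space \<times> real \<Rightarrow> real"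
  shows "laplacian f p = (\<Sum>e\<in>Basis. dirderiv (dirderiv f (e, 0)) (e, 0) p)
                         + dirderiv (dirderiv f (0, 1)) (0, 1) p"
  unfolding laplacian_def sum_Basis_prod_real ..

lemma deriv_deriv_eqI:
  fixes g :: "real \<Rightarrow> real"
  assumes "open U" "t \<in> U" "\<And>\<tau>. \<tau> \<in> U \<Longrightarrow> (g has_real_derivative g' \<tau>) (at \<tau>)"
    and "(g' has_real_derivative g'') (at t)"
  shows "deriv (deriv g) t = g''"
proof (rule DERIV_imp_deriv, rule has_field_derivative_transform_within_open)
  show "(g' has_real_derivative g'') (at t)" by fact
  show "g' \<tau> = deriv g \<tau>" if "\<tau> \<in> U" for \<tau>
    using DERIV_imp_deriv[OF assms(3)[OF that]] by simp
qed (use assms in auto)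

lemma has_real_derivative_shift_0:
  "(f has_real_derivative D) (at y) \<Longrightarrow> ((\<lambda>h. f (y + h)) has_real_derivative D) (at 0)"
  using DERIV_shift[of f D 0 y] by (simp add: add.commute)

section \<open>The hyperbolic radius\<close>

definition hyperbolic_radius :: "real \<Rightarrow> real \<Rightarrow> real" where
  "hyperbolic_radius y t = sqrt (y\<^sup>2 - t\<^sup>2)"

lemma hyperbolic_radius_pos:
  assumes "\<bar>t\<bar> < y"
  shows "hyperbolic_radius y t > 0"
proof -
  have "t\<^sup>2 < y\<^sup>2"
    using assms abs_le_square_iff[of y t] by auto
  then show ?thesis
    unfolding hyperbolic_radius_def by simp
qed

lemma hyperbolic_radius_square: "\<bar>t\<bar> < y \<Longrightarrow> (hyperbolic_radius y t)\<^sup>2 = y\<^sup>2 - t\<^sup>2"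
  using hyperbolic_radius_pos[of t y] unfolding hyperbolic_radius_def
  by (metis real_sqrt_gt_0_iff real_sqrt_pow2 less_imp_le)

lemma hyperbolic_radius_has_derivative_fst:
  assumes "\<bar>t\<bar> < y"
  shows "((\<lambda>\<eta>. hyperbolic_radius \<eta> t) has_real_derivative y / hyperbolic_radius y t) (at y)"
proof -
  have "y\<^sup>2 - t\<^sup>2 > 0"
    using hyperbolic_radius_pos[OF assms] by (simp add: hyperbolic_radius_def)
  then show ?thesis
    unfolding hyperbolic_radius_def
    by (auto intro!: derivative_eq_intros simp: field_simps)
qed

lemma hyperbolic_radius_has_derivative_snd:
  assumes "\<bar>t\<bar> < y"
  shows "((\<lambda>\<tau>. hyperbolic_radius y \<tau>) has_real_derivative - t / hyperbolic_radius y t) (at t)"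
proof -
  have "y\<^sup>2 - t\<^sup>2 > 0"
    using hyperbolic_radius_pos[OF assms] by (simp add: hyperbolic_radius_def)
  then show ?thesis
    unfolding hyperbolic_radius_def
    by (auto intro!: derivative_eq_intros simp: field_simps)
qed

lemma continuous_on_hyperbolic_radius [continuous_intros]:
  "continuous_on S f \<Longrightarrow> continuous_on S g \<Longrightarrow> continuous_on S (\<lambda>p. hyperbolic_radius (f p) (g p))"
  unfolding hyperbolic_radius_def by (intro continuous_intros)

lemma deriv_deriv_hyperbolic_radius_snd:
  fixes f f' f'' :: "real \<Rightarrow> real"
  assumes f: "\<And>\<rho>. \<rho> > 0 \<Longrightarrow> (f has_real_derivative f' \<rho>) (at \<rho>)"
    and f': "\<And>\<rho>. \<rho> > 0 \<Longrightarrow> (f' has_real_derivative f'' \<rho>) (at \<rho>)"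
    and yt: "\<bar>t\<bar> < y"
  defines "r \<equiv> hyperbolic_radius y t"
  shows "deriv (deriv (\<lambda>\<tau>. f (hyperbolic_radius y \<tau>))) t = f'' r * t\<^sup>2 / r\<^sup>2 - f' r * (r\<^sup>2 + t\<^sup>2) / r ^ 3"
proof (rule deriv_deriv_eqI)
  let ?R = "hyperbolic_radius y"
  have R: "(?R has_real_derivative - \<tau> / ?R \<tau>) (at \<tau>)" "?R \<tau> > 0" if "\<tau> \<in> {-y<..<y}" for \<tau>
    using that hyperbolic_radius_has_derivative_snd hyperbolic_radius_pos by (auto simp: abs_less_iff)
  show "((\<lambda>\<tau>. f (?R \<tau>)) has_real_derivative f' (?R \<tau>) * (- \<tau> / ?R \<tau>)) (at \<tau>)"
    if "\<tau> \<in> {-y<..<y}" for \<tau>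
    by (rule DERIV_chain2[OF f]) (use R that in auto)
  have t: "t \<in> {-y<..<y}"
    using yt by (auto simp: abs_less_iff)
  have "((\<lambda>\<tau>. f' (?R \<tau>)) has_real_derivative f'' r * (- t / r)) (at t)"
    unfolding r_def by (rule DERIV_chain2[OF f']) (use R t in auto)
  moreover have "((\<lambda>\<tau>. - \<tau> / ?R \<tau>) has_real_derivative (- r - (- t) * (- t / r)) / (r * r)) (at t)"
    unfolding r_def using R[OF t] by (intro DERIV_divide derivative_eq_intros) auto
  ultimately show "((\<lambda>\<tau>. f' (?R \<tau>) * (- \<tau> / ?R \<tau>)) has_real_derivative
      f'' r * t\<^sup>2 / r\<^sup>2 - f' r * (r\<^sup>2 + t\<^sup>2) / r ^ 3) (at t)"
    using R(2)[OF t]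
    by (intro DERIV_cong[OF DERIV_mult]) (auto simp: r_def[symmetric] field_simps power2_eq_square power3_eq_cube)
qed (use yt in \<open>auto simp: abs_less_iff\<close>)

lemma deriv_deriv_hyperbolic_radius_fst:
  fixes f f' f'' :: "real \<Rightarrow> real"
  assumes f: "\<And>\<rho>. \<rho> > 0 \<Longrightarrow> (f has_real_derivative f' \<rho>) (at \<rho>)"
    and f': "\<And>\<rho>. \<rho> > 0 \<Longrightarrow> (f' has_real_derivative f'' \<rho>) (at \<rho>)"
    and yt: "\<bar>t\<bar> < y"
  defines "r \<equiv> hyperbolic_radius y t"
  shows "deriv (deriv (\<lambda>\<eta>. f (hyperbolic_radius \<eta> t))) y = f'' r * y\<^sup>2 / r\<^sup>2 + f' r * (r\<^sup>2 - y\<^sup>2) / r ^ 3"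
proof (rule deriv_deriv_eqI)
  let ?R = "\<lambda>\<eta>. hyperbolic_radius \<eta> t"
  have R: "(?R has_real_derivative \<eta> / ?R \<eta>) (at \<eta>)" "?R \<eta> > 0" if "\<eta> \<in> {\<bar>t\<bar><..}" for \<eta>
    using that hyperbolic_radius_has_derivative_fst hyperbolic_radius_pos by auto
  show "((\<lambda>\<eta>. f (?R \<eta>)) has_real_derivative f' (?R \<eta>) * (\<eta> / ?R \<eta>)) (at \<eta>)"
    if "\<eta> \<in> {\<bar>t\<bar><..}" for \<eta>
    by (rule DERIV_chain2[OF f]) (use R that in auto)
  have y: "y \<in> {\<bar>t\<bar><..}"
    using yt by auto
  have "((\<lambda>\<eta>. f' (?R \<eta>)) has_real_derivative f'' r * (y / r)) (at y)"
    unfolding r_def by (rule DERIV_chain2[OF f']) (use R y in auto)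
  moreover have "((\<lambda>\<eta>. \<eta> / ?R \<eta>) has_real_derivative (r - y * (y / r)) / (r * r)) (at y)"
    unfolding r_def using R[OF y] by (intro DERIV_divide derivative_eq_intros) auto
  ultimately show "((\<lambda>\<eta>. f' (?R \<eta>) * (\<eta> / ?R \<eta>)) has_real_derivative
      f'' r * y\<^sup>2 / r\<^sup>2 + f' r * (r\<^sup>2 - y\<^sup>2) / r ^ 3) (at y)"
    using R(2)[OF y]
    by (intro DERIV_cong[OF DERIV_mult]) (auto simp: r_def[symmetric] field_simps power2_eq_square power3_eq_cube)
qed (use yt in auto)

lemma hyperbolic_radial_wave_operator:
  fixes f f' f'' :: "real \<Rightarrow> real"
  assumes f: "\<And>\<rho>. \<rho> > 0 \<Longrightarrow> (f has_real_derivative f' \<rho>) (at \<rho>)"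
    and f': "\<And>\<rho>. \<rho> > 0 \<Longrightarrow> (f' has_real_derivative f'' \<rho>) (at \<rho>)"
    and yt: "\<bar>t\<bar> < y"
  defines "r \<equiv> hyperbolic_radius y t"
  shows "deriv (deriv (\<lambda>\<tau>. f (hyperbolic_radius y \<tau>))) t - deriv (deriv (\<lambda>\<eta>. f (hyperbolic_radius \<eta> t))) y
         = - f'' r - f' r / r"
proof -
  have "r > 0" and y: "y\<^sup>2 = r\<^sup>2 + t\<^sup>2"
    using hyperbolic_radius_pos[OF yt] hyperbolic_radius_square[OF yt] by (simp_all add: r_def)
  have "deriv (deriv (\<lambda>\<tau>. f (hyperbolic_radius y \<tau>))) t - deriv (deriv (\<lambda>\<eta>. f (hyperbolic_radius \<eta> t))) y
      = f'' r * t\<^sup>2 / r\<^sup>2 - f' r * (r\<^sup>2 + t\<^sup>2) / r ^ 3 - (f'' r * y\<^sup>2 / r\<^sup>2 + f' r * (r\<^sup>2 - y\<^sup>2) / r ^ 3)"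
    unfolding r_def using deriv_deriv_hyperbolic_radius_snd[OF f f' yt] deriv_deriv_hyperbolic_radius_fst[OF f f' yt]
    by simp
  also have "\<dots> = - f'' r - f' r / r"
    unfolding y using \<open>r > 0\<close> by (simp add: field_simps power2_eq_square power3_eq_cube)
  finally show ?thesis .
qed

section \<open>Sine moments\<close>

definition sine_moment :: "('a \<times> real \<Rightarrow> real) \<Rightarrow> nat \<Rightarrow> 'a \<Rightarrow> real \<Rightarrow> real" where
  "sine_moment \<psi> k x \<rho> = integral {0..pi/2} (\<lambda>s. \<psi> (x, \<rho> * sin s) * sin s ^ k)"

lemma sine_moment_integrable:
  fixes \<psi> :: "'a::metric_space \<times> real \<Rightarrow> real"
  assumes "continuous_on UNIV \<psi>"
  shows "(\<lambda>s. \<psi> (x, \<rho> * sin s) * sin s ^ k) integrable_on {0..pi/2}"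
  unfolding cbox_interval[symmetric]
  by (intro integrable_continuous continuous_intros continuous_on_compose2[OF assms _ subset_UNIV])

lemma continuous_on_sine_moment_UNIV:
  fixes \<psi> :: "'a::metric_space \<times> real \<Rightarrow> real"
  assumes "continuous_on UNIV \<psi>"
  shows "continuous_on UNIV (\<lambda>(x, \<rho>). sine_moment \<psi> k x \<rho>)"
proof -
  have "continuous_on (UNIV \<times> cbox 0 (pi/2)) (\<lambda>(q, s). \<psi> (fst q, snd q * sin s) * sin s ^ k)"
    unfolding case_prod_beta'
    by (intro continuous_intros continuous_on_compose2[OF assms _ subset_UNIV])
  from integral_continuous_on_param[OF this] show ?thesis
    by (simp add: sine_moment_def cbox_interval case_prod_beta')
qed

lemma continuous_on_sine_moment [continuous_intros]:
  fixes \<psi> :: "'a::metric_space \<times> real \<Rightarrow> real"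
  assumes "continuous_on UNIV \<psi>" "continuous_on S X" "continuous_on S R"
  shows "continuous_on S (\<lambda>p. sine_moment \<psi> k (X p) (R p))"
  using continuous_on_compose2[OF continuous_on_sine_moment_UNIV[OF assms(1)], of S "\<lambda>p. (X p, R p)"]
    assms(2,3) by (auto intro: continuous_on_Pair)

lemma sine_moment_has_derivative_fst:
  fixes \<psi> :: "'a::euclidean_space \<times> real \<Rightarrow> real"
  assumes "smooth_on UNIV \<psi>" "e \<in> Basis"
  shows "((\<lambda>h. sine_moment \<psi> k (x + h *\<^sub>R e) \<rho>) has_real_derivative
           sine_moment (dirderiv \<psi> (e, 0)) k x \<rho>) (at 0)"
proof -
  have "((\<lambda>h. integral (cbox 0 (pi/2)) (\<lambda>s. \<psi> (x + h *\<^sub>R e, \<rho> * sin s) * sin s ^ k))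
         has_real_derivative integral (cbox 0 (pi/2))
           (\<lambda>s. dirderiv \<psi> (e, 0) (x + 0 *\<^sub>R e, \<rho> * sin s) * sin s ^ k)) (at 0 within UNIV)"
  proof (rule leibniz_rule_field_derivative
      [where fx = "\<lambda>h s. dirderiv \<psi> (e, 0) (x + h *\<^sub>R e, \<rho> * sin s) * sin s ^ k"])
    show "((\<lambda>h. \<psi> (x + h *\<^sub>R e, \<rho> * sin s) * sin s ^ k) has_real_derivative
            dirderiv \<psi> (e, 0) (x + h *\<^sub>R e, \<rho> * sin s) * sin s ^ k) (at h within UNIV)" for h s
      by (intro DERIV_cmult_right smooth_on_has_derivative_fst assms)
    show "(\<lambda>s. \<psi> (x + h *\<^sub>R e, \<rho> * sin s) * sin s ^ k) integrable_on cbox 0 (pi/2)" for h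
      using sine_moment_integrable[OF smooth_on_imp_continuous_on[OF assms(1)]]
      by (simp add: cbox_interval)
    have cont: "continuous_on UNIV (dirderiv \<psi> (e, 0))"
      using assms by (intro smooth_on_imp_continuous_on smooth_on_dirderiv) (auto simp: Basis_prod_def)
    show "continuous_on (UNIV \<times> cbox 0 (pi/2))
        (\<lambda>(h, s). dirderiv \<psi> (e, 0) (x + h *\<^sub>R e, \<rho> * sin s) * sin s ^ k)"
      unfolding case_prod_beta' by (intro continuous_intros continuous_on_compose2[OF cont _ subset_UNIV])
  qed auto
  then show ?thesis
    by (simp add: sine_moment_def cbox_interval)
qed

lemma sine_moment_has_derivative_snd:
  fixes \<psi> :: "'a::euclidean_space \<times> real \<Rightarrow> real"
  assumes "smooth_on UNIV \<psi>"
  shows "((\<lambda>\<rho>. sine_moment \<psi> k x \<rho>) has_real_derivative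
           sine_moment (dirderiv \<psi> (0, 1)) (Suc k) x \<rho>) (at \<rho>)"
proof -
  have "((\<lambda>\<rho>. integral (cbox 0 (pi/2)) (\<lambda>s. \<psi> (x, \<rho> * sin s) * sin s ^ k))
         has_real_derivative integral (cbox 0 (pi/2))
           (\<lambda>s. dirderiv \<psi> (0, 1) (x, \<rho> * sin s) * sin s ^ Suc k)) (at \<rho> within UNIV)"
  proof (rule leibniz_rule_field_derivative
      [where fx = "\<lambda>r s. dirderiv \<psi> (0, 1) (x, r * sin s) * sin s ^ Suc k"])
    show "((\<lambda>\<rho>. \<psi> (x, \<rho> * sin s) * sin s ^ k) has_real_derivative
            dirderiv \<psi> (0, 1) (x, r * sin s) * sin s ^ Suc k) (at r within UNIV)" for r s
    proof -
      have "((\<lambda>\<rho>. \<psi> (x, \<rho> * sin s)) has_real_derivative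
              dirderiv \<psi> (0, 1) (x, r * sin s) * sin s) (at r)"
        by (rule DERIV_chain2[OF smooth_on_has_derivative_snd[OF assms]])
          (auto intro!: derivative_eq_intros)
      from DERIV_cmult_right[OF this, of "sin s ^ k"] show ?thesis
        by (simp add: algebra_simps)
    qed
    show "(\<lambda>s. \<psi> (x, r * sin s) * sin s ^ k) integrable_on cbox 0 (pi/2)" for r
      using sine_moment_integrable[OF smooth_on_imp_continuous_on[OF assms]]
      by (simp add: cbox_interval)
    have cont: "continuous_on UNIV (dirderiv \<psi> (0, 1))"
      using assms by (intro smooth_on_imp_continuous_on smooth_on_dirderiv) (auto simp: Basis_prod_def)
    show "continuous_on (UNIV \<times> cbox 0 (pi/2))
        (\<lambda>(r, s). dirderiv \<psi> (0, 1) (x, r * sin s) * sin s ^ Suc k)"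
      unfolding case_prod_beta' by (intro continuous_intros continuous_on_compose2[OF cont _ subset_UNIV])
  qed auto
  then show ?thesis
    by (simp add: sine_moment_def cbox_interval)
qed

lemma sine_moment_sum:
  fixes \<psi> :: "'i \<Rightarrow> 'a::metric_space \<times> real \<Rightarrow> real"
  assumes "finite I" "\<And>i. i \<in> I \<Longrightarrow> continuous_on UNIV (\<psi> i)"
  shows "sine_moment (\<lambda>p. \<Sum>i\<in>I. \<psi> i p) k x \<rho> = (\<Sum>i\<in>I. sine_moment (\<psi> i) k x \<rho>)"
  unfolding sine_moment_def sum_distrib_right
  using assms by (intro integral_sum sine_moment_integrable)

lemma sine_moment_by_parts:
  fixes g :: "'a::euclidean_space \<times> real \<Rightarrow> real"
  assumes "smooth_on UNIV g" "g (x, 0) = 0"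
  shows "\<rho> * (sine_moment (dirderiv g (0, 1)) 0 x \<rho> - sine_moment (dirderiv g (0, 1)) 2 x \<rho>)
         = sine_moment g 1 x \<rho>"
proof -
  define g' where "g' = dirderiv g (0, 1)"
  let ?f0 = "\<lambda>s. g' (x, \<rho> * sin s) * sin s ^ 0"
  let ?f2 = "\<lambda>s. g' (x, \<rho> * sin s) * sin s ^ 2"
  let ?f1 = "\<lambda>s. g (x, \<rho> * sin s) * sin s ^ 1"
  let ?G = "\<lambda>s. cos s * g (x, \<rho> * sin s)"
  have "continuous_on UNIV g'"
    using assms(1) unfolding g'_def
    by (intro smooth_on_imp_continuous_on smooth_on_dirderiv) (auto simp: Basis_prod_def)
  then have int: "?f0 integrable_on {0..pi/2}" "?f2 integrable_on {0..pi/2}" "?f1 integrable_on {0..pi/2}"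
    using sine_moment_integrable smooth_on_imp_continuous_on[OF assms(1)] by blast+
  have "(?G has_real_derivative \<rho> * (?f0 s - ?f2 s) - ?f1 s) (at s)" for s
  proof -
    have "((\<lambda>s. g (x, \<rho> * sin s)) has_real_derivative g' (x, \<rho> * sin s) * (\<rho> * cos s)) (at s)"
      unfolding g'_def
      by (rule DERIV_chain2[OF smooth_on_has_derivative_snd[OF assms(1)]])
        (auto intro!: derivative_eq_intros)
    then have "(?G has_real_derivative \<rho> * g' (x, \<rho> * sin s) * (cos s)\<^sup>2 - g (x, \<rho> * sin s) * sin s) (at s)"
      by (rule DERIV_cong[OF DERIV_mult[OF DERIV_cos]]) (simp add: power2_eq_square algebra_simps)
    moreover have "\<rho> * (?f0 s - ?f2 s) - ?f1 s = \<rho> * g' (x, \<rho> * sin s) * (cos s)\<^sup>2 - g (x, \<rho> * sin s) * sin s"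
      by (simp add: cos_squared_eq algebra_simps)
    ultimately show ?thesis by metis
  qed
  then have "((\<lambda>s. \<rho> * (?f0 s - ?f2 s) - ?f1 s) has_integral ?G (pi/2) - ?G 0) {0..pi/2}"
    by (intro fundamental_theorem_of_calculus)
      (auto simp: has_real_derivative_iff_has_vector_derivative[symmetric] intro: has_field_derivative_at_within)
  then have "((\<lambda>s. \<rho> * (?f0 s - ?f2 s) - ?f1 s) has_integral 0) {0..pi/2}"
    using assms(2) by simp
  moreover have "((\<lambda>s. \<rho> * (?f0 s - ?f2 s) - ?f1 s) has_integral
      \<rho> * (integral {0..pi/2} ?f0 - integral {0..pi/2} ?f2) - integral {0..pi/2} ?f1) {0..pi/2}"
    by (intro has_integral_diff has_integral_mult_right integrable_integral int)
  ultimately have "\<rho> * (integral {0..pi/2} ?f0 - integral {0..pi/2} ?f2) - integral {0..pi/2} ?f1 = 0"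
    using has_integral_unique by blast
  then show ?thesis
    unfolding sine_moment_def g'_def[symmetric] by simp
qed

section \<open>Smoothness of moment expressions on the wedge\<close>

definition wedge :: "(('a \<times> real) \<times> real) set" where
  "wedge = {((x, y), t). \<bar>t\<bar> < y}"

lemma mem_wedge_iff: "p \<in> wedge \<longleftrightarrow> \<bar>snd p\<bar> < snd (fst p)"
  by (cases p) (auto simp: wedge_def)

lemma open_wedge: "open (wedge :: (('a::topological_space \<times> real) \<times> real) set)"
proof -
  have wedge_eq: "wedge = {p :: ('a \<times> real) \<times> real. \<bar>snd p\<bar> < snd (fst p)}"
    using mem_wedge_iff by blast
  show ?thesis
    unfolding wedge_eq by (intro open_Collect_less continuous_intros)
qed

inductive wedge_coeff :: "(real \<times> real \<Rightarrow> real) \<Rightarrow> bool" where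
  wedge_coeff_const: "wedge_coeff (\<lambda>_. a)"
| wedge_coeff_fst: "wedge_coeff fst"
| wedge_coeff_snd: "wedge_coeff snd"
| wedge_coeff_inverse_radius: "wedge_coeff (\<lambda>q. inverse (hyperbolic_radius (fst q) (snd q)))"
| wedge_coeff_add: "wedge_coeff c \<Longrightarrow> wedge_coeff d \<Longrightarrow> wedge_coeff (\<lambda>q. c q + d q)"
| wedge_coeff_mult: "wedge_coeff c \<Longrightarrow> wedge_coeff d \<Longrightarrow> wedge_coeff (\<lambda>q. c q * d q)"

lemma continuous_on_wedge_coeff: "wedge_coeff c \<Longrightarrow> continuous_on {q. \<bar>snd q\<bar> < fst q} c"
proof (induction rule: wedge_coeff.induct)
  case wedge_coeff_inverse_radius
  show ?case
    using hyperbolic_radius_pos by (force intro!: continuous_intros)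
next
  case (wedge_coeff_add c d)
  then show ?case by (intro continuous_on_add wedge_coeff_add.IH)
next
  case (wedge_coeff_mult c d)
  then show ?case by (intro continuous_on_mult wedge_coeff_mult.IH)
qed (intro continuous_intros)+

definition has_wedge_partials ::
    "(real \<times> real \<Rightarrow> real) \<Rightarrow> (real \<times> real \<Rightarrow> real) \<Rightarrow> (real \<times> real \<Rightarrow> real) \<Rightarrow> bool" where
  "has_wedge_partials c cy ct \<longleftrightarrow> (\<forall>y t. \<bar>t\<bar> < y \<longrightarrow>
     ((\<lambda>\<eta>. c (\<eta>, t)) has_real_derivative cy (y, t)) (at y) \<and>
     ((\<lambda>\<tau>. c (y, \<tau>)) has_real_derivative ct (y, t)) (at t))"

lemma has_wedge_partials_add:
  "has_wedge_partials c cy ct \<Longrightarrow> has_wedge_partials d dy dt \<Longrightarrow>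
   has_wedge_partials (\<lambda>q. c q + d q) (\<lambda>q. cy q + dy q) (\<lambda>q. ct q + dt q)"
  unfolding has_wedge_partials_def by (auto intro!: DERIV_add)

lemma has_wedge_partials_mult:
  "has_wedge_partials c cy ct \<Longrightarrow> has_wedge_partials d dy dt \<Longrightarrow>
   has_wedge_partials (\<lambda>q. c q * d q) (\<lambda>q. cy q * d q + dy q * c q) (\<lambda>q. ct q * d q + dt q * c q)"
  unfolding has_wedge_partials_def by (auto intro!: DERIV_mult)

lemma has_wedge_partials_inverse_radius:
  defines "i \<equiv> \<lambda>q. inverse (hyperbolic_radius (fst q) (snd q))"
  shows "has_wedge_partials i (\<lambda>q. -1 * fst q * (i q * (i q * i q))) (\<lambda>q. snd q * (i q * (i q * i q)))"
  unfolding has_wedge_partials_def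
proof (intro allI impI conjI)
  fix y t :: real
  assume yt: "\<bar>t\<bar> < y"
  then have nz: "hyperbolic_radius y t \<noteq> 0"
    using hyperbolic_radius_pos by force
  show "((\<lambda>\<eta>. i (\<eta>, t)) has_real_derivative -1 * fst (y, t) * (i (y, t) * (i (y, t) * i (y, t)))) (at y)"
    using DERIV_inverse_fun[OF hyperbolic_radius_has_derivative_fst[OF yt] nz]
    by (simp add: i_def power2_eq_square field_simps)
  show "((\<lambda>\<tau>. i (y, \<tau>)) has_real_derivative snd (y, t) * (i (y, t) * (i (y, t) * i (y, t)))) (at t)"
    using DERIV_inverse_fun[OF hyperbolic_radius_has_derivative_snd[OF yt] nz]
    by (simp add: i_def power2_eq_square field_simps)
qed

lemma wedge_coeff_partials:
  "wedge_coeff c \<Longrightarrow> \<exists>cy ct. wedge_coeff cy \<and> wedge_coeff ct \<and> has_wedge_partials c cy ct"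
proof (induction rule: wedge_coeff.induct)
  case wedge_coeff_const
  show ?case
    by (rule exI[of _ "\<lambda>_. 0"], rule exI[of _ "\<lambda>_. 0"])
      (simp add: has_wedge_partials_def wedge_coeff.wedge_coeff_const)
next
  case wedge_coeff_fst
  show ?case
    by (rule exI[of _ "\<lambda>_. 1"], rule exI[of _ "\<lambda>_. 0"])
      (simp add: has_wedge_partials_def wedge_coeff.wedge_coeff_const)
next
  case wedge_coeff_snd
  show ?case
    by (rule exI[of _ "\<lambda>_. 0"], rule exI[of _ "\<lambda>_. 1"])
      (simp add: has_wedge_partials_def wedge_coeff.wedge_coeff_const)
next
  case wedge_coeff_inverse_radius
  let ?i = "\<lambda>q. inverse (hyperbolic_radius (fst q) (snd q))"
  have "wedge_coeff (\<lambda>q. -1 * fst q * (?i q * (?i q * ?i q)))"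
    "wedge_coeff (\<lambda>q. snd q * (?i q * (?i q * ?i q)))"
    by (intro wedge_coeff.intros(1-4) wedge_coeff.wedge_coeff_mult)+
  with has_wedge_partials_inverse_radius show ?case
    by blast
next
  case (wedge_coeff_add c d)
  then obtain cy ct dy dt where c: "wedge_coeff cy" "wedge_coeff ct" "has_wedge_partials c cy ct"
    and d: "wedge_coeff dy" "wedge_coeff dt" "has_wedge_partials d dy dt"
    by blast
  show ?case
    using has_wedge_partials_add[OF c(3) d(3)]
      wedge_coeff.wedge_coeff_add[OF c(1) d(1)] wedge_coeff.wedge_coeff_add[OF c(2) d(2)] by blast
next
  case (wedge_coeff_mult c d)
  then obtain cy ct dy dt where c: "wedge_coeff cy" "wedge_coeff ct" "has_wedge_partials c cy ct"
    and d: "wedge_coeff dy" "wedge_coeff dt" "has_wedge_partials d dy dt"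
    by blast
  have "wedge_coeff (\<lambda>q. cy q * d q + dy q * c q)" "wedge_coeff (\<lambda>q. ct q * d q + dt q * c q)"
    using c d wedge_coeff_mult.hyps by (simp_all add: wedge_coeff.wedge_coeff_add wedge_coeff.wedge_coeff_mult)
  with has_wedge_partials_mult[OF c(3) d(3)] show ?case
    by blast
qed

lemma Basis_prod_prod_cases:
  assumes "b \<in> (Basis :: (('a::euclidean_space \<times> real) \<times> real) set)"
  obtains e where "e \<in> Basis" "b = ((e, 0), 0)" | "b = ((0, 1), 0)" | "b = ((0, 0), 1)"
  using assms by (auto simp: Basis_prod_def zero_prod_def)

definition moment_term ::
    "('a \<times> real \<Rightarrow> real) \<Rightarrow> (real \<times> real \<Rightarrow> real) \<Rightarrow> nat \<Rightarrow> ('a \<times> real) \<times> real \<Rightarrow> real" where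
  "moment_term \<psi> c k = (\<lambda>((x, y), t). c (y, t) * sine_moment \<psi> k x (hyperbolic_radius y t))"

lemma moment_term_apply [simp]:
  "moment_term \<psi> c k ((x, y), t) = c (y, t) * sine_moment \<psi> k x (hyperbolic_radius y t)"
  by (simp add: moment_term_def)

inductive moment_expr :: "(('a::euclidean_space \<times> real) \<times> real \<Rightarrow> real) \<Rightarrow> bool" where
  moment_expr_term: "smooth_on UNIV \<psi> \<Longrightarrow> wedge_coeff c \<Longrightarrow> moment_expr (moment_term \<psi> c k)"
| moment_expr_add: "moment_expr f \<Longrightarrow> moment_expr g \<Longrightarrow> moment_expr (\<lambda>p. f p + g p)"

lemma continuous_on_moment_term:
  fixes \<psi> :: "'a::euclidean_space \<times> real \<Rightarrow> real"
  assumes "smooth_on UNIV \<psi>" "wedge_coeff c"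
  shows "continuous_on wedge (moment_term \<psi> c k)"
proof -
  have "moment_term \<psi> c k = (\<lambda>p. c (snd (fst p), snd p) *
      sine_moment \<psi> k (fst (fst p)) (hyperbolic_radius (snd (fst p)) (snd p)))"
    by (auto simp: moment_term_def)
  moreover have "continuous_on wedge (\<lambda>p::('a \<times> real) \<times> real. c (snd (fst p), snd p))"
    by (rule continuous_on_compose2[OF continuous_on_wedge_coeff[OF assms(2)]])
      (auto simp: mem_wedge_iff intro!: continuous_intros)
  ultimately show ?thesis
    using smooth_on_imp_continuous_on[OF assms(1)] by (auto intro!: continuous_intros)
qed

lemma continuous_on_moment_expr: "moment_expr f \<Longrightarrow> continuous_on wedge f"
proof (induction rule: moment_expr.induct)
  case (moment_expr_term \<psi> c k)
  then show ?case by (rule continuous_on_moment_term)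
next
  case (moment_expr_add f g)
  then show ?case by (intro continuous_on_add)
qed

lemma moment_term_has_derivative_x:
  fixes \<psi> :: "'a::euclidean_space \<times> real \<Rightarrow> real"
  assumes "smooth_on UNIV \<psi>" "e \<in> Basis"
  shows "((\<lambda>h. moment_term \<psi> c k ((x + h *\<^sub>R e, y), t)) has_real_derivative
           moment_term (dirderiv \<psi> (e, 0)) c k ((x, y), t)) (at 0)"
  using DERIV_cmult[OF sine_moment_has_derivative_fst[OF assms], of "c (y, t)"] by simp

lemma moment_term_has_derivative_y:
  fixes \<psi> :: "'a::euclidean_space \<times> real \<Rightarrow> real"
  assumes "smooth_on UNIV \<psi>" "has_wedge_partials c cy ct" "\<bar>t\<bar> < y"
  shows "((\<lambda>\<eta>. moment_term \<psi> c k ((x, \<eta>), t)) has_real_derivative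
           moment_term \<psi> cy k ((x, y), t) +
           moment_term (dirderiv \<psi> (0, 1)) (\<lambda>q. c q * fst q * inverse (hyperbolic_radius (fst q) (snd q)))
             (Suc k) ((x, y), t)) (at y)"
proof -
  have "((\<lambda>\<eta>. c (\<eta>, t)) has_real_derivative cy (y, t)) (at y)"
    using assms(2,3) by (simp add: has_wedge_partials_def)
  moreover have "((\<lambda>\<eta>. sine_moment \<psi> k x (hyperbolic_radius \<eta> t)) has_real_derivative
      sine_moment (dirderiv \<psi> (0, 1)) (Suc k) x (hyperbolic_radius y t) * (y / hyperbolic_radius y t)) (at y)"
    by (rule DERIV_chain2[OF sine_moment_has_derivative_snd[OF assms(1)]
          hyperbolic_radius_has_derivative_fst[OF assms(3)]])
  ultimately show ?thesis
    by (auto intro!: DERIV_cong[OF DERIV_mult] simp: field_simps)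
qed

lemma moment_term_has_derivative_t:
  fixes \<psi> :: "'a::euclidean_space \<times> real \<Rightarrow> real"
  assumes "smooth_on UNIV \<psi>" "has_wedge_partials c cy ct" "\<bar>t\<bar> < y"
  shows "((\<lambda>\<tau>. moment_term \<psi> c k ((x, y), \<tau>)) has_real_derivative
           moment_term \<psi> ct k ((x, y), t) +
           moment_term (dirderiv \<psi> (0, 1)) (\<lambda>q. c q * (-1 * snd q) * inverse (hyperbolic_radius (fst q) (snd q)))
             (Suc k) ((x, y), t)) (at t)"
proof -
  have "((\<lambda>\<tau>. c (y, \<tau>)) has_real_derivative ct (y, t)) (at t)"
    using assms(2,3) by (simp add: has_wedge_partials_def)
  moreover have "((\<lambda>\<tau>. sine_moment \<psi> k x (hyperbolic_radius y \<tau>)) has_real_derivative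
      sine_moment (dirderiv \<psi> (0, 1)) (Suc k) x (hyperbolic_radius y t) * (- t / hyperbolic_radius y t)) (at t)"
    by (rule DERIV_chain2[OF sine_moment_has_derivative_snd[OF assms(1)]
          hyperbolic_radius_has_derivative_snd[OF assms(3)]])
  ultimately show ?thesis
    by (auto intro!: DERIV_cong[OF DERIV_mult] simp: field_simps)
qed

lemma moment_term_partial:
  fixes \<psi> :: "'a::euclidean_space \<times> real \<Rightarrow> real" and b :: "('a \<times> real) \<times> real"
  assumes \<psi>: "smooth_on UNIV \<psi>" and c: "wedge_coeff c" and b: "b \<in> Basis"
  shows "\<exists>g. moment_expr g \<and> (\<forall>x y t. \<bar>t\<bar> < y \<longrightarrow>
           ((\<lambda>h. moment_term \<psi> c k (((x, y), t) + h *\<^sub>R b)) has_real_derivative g ((x, y), t)) (at 0))"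
proof -
  obtain cy ct where c': "wedge_coeff cy" "wedge_coeff ct" "has_wedge_partials c cy ct"
    using wedge_coeff_partials[OF c] by blast
  have \<psi>': "smooth_on UNIV (dirderiv \<psi> (0, 1))"
    using \<psi> by (rule smooth_on_dirderiv) (simp add: Basis_prod_def)
  from b show ?thesis
  proof (cases rule: Basis_prod_prod_cases)
    case (1 e)
    have "smooth_on UNIV (dirderiv \<psi> (e, 0))"
      using \<psi> by (rule smooth_on_dirderiv) (simp add: Basis_prod_def 1)
    with c have "moment_expr (moment_term (dirderiv \<psi> (e, 0)) c k)"
      by (intro moment_expr.intros)
    then show ?thesis
      using moment_term_has_derivative_x[OF \<psi> 1(1)] by (auto simp: 1(2))
  next
    case 2
    let ?g = "\<lambda>p. moment_term \<psi> cy k p + moment_term (dirderiv \<psi> (0, 1))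
                 (\<lambda>q. c q * fst q * inverse (hyperbolic_radius (fst q) (snd q))) (Suc k) p"
    have "moment_expr ?g"
      using \<psi> \<psi>' c c' by (intro moment_expr.intros wedge_coeff.wedge_coeff_mult wedge_coeff.intros(2,4))
    then show ?thesis
      using has_real_derivative_shift_0[OF moment_term_has_derivative_y[OF \<psi> c'(3)]] by (auto simp: 2)
  next
    case 3
    let ?g = "\<lambda>p. moment_term \<psi> ct k p + moment_term (dirderiv \<psi> (0, 1))
                 (\<lambda>q. c q * (-1 * snd q) * inverse (hyperbolic_radius (fst q) (snd q))) (Suc k) p"
    have "moment_expr ?g"
      using \<psi> \<psi>' c c' by (intro moment_expr.intros wedge_coeff.wedge_coeff_mult wedge_coeff.intros(1,3,4))
    then show ?thesis
      using has_real_derivative_shift_0[OF moment_term_has_derivative_t[OF \<psi> c'(3)]] by (auto simp: 3)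
  qed
qed

lemma moment_expr_partial:
  fixes b :: "('a::euclidean_space \<times> real) \<times> real"
  assumes "moment_expr f" "b \<in> Basis"
  shows "\<exists>g. moment_expr g \<and> (\<forall>p\<in>wedge. ((\<lambda>h. f (p + h *\<^sub>R b)) has_real_derivative g p) (at 0))"
  using assms(1)
proof (induction rule: moment_expr.induct)
  case (moment_expr_term \<psi> c k)
  then obtain g where "moment_expr g" and g: "\<forall>x y t. \<bar>t\<bar> < y \<longrightarrow>
      ((\<lambda>h. moment_term \<psi> c k (((x, y), t) + h *\<^sub>R b)) has_real_derivative g ((x, y), t)) (at 0)"
    using moment_term_partial[OF _ _ assms(2)] by blast
  moreover have "((\<lambda>h. moment_term \<psi> c k (p + h *\<^sub>R b)) has_real_derivative g p) (at 0)" if "p \<in> wedge" for p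
    using that g by (cases p) (auto simp: mem_wedge_iff)
  ultimately show ?case
    by blast
next
  case (moment_expr_add f g)
  then obtain f' g' where "moment_expr f'" "moment_expr g'"
    "\<forall>p\<in>wedge. ((\<lambda>h. f (p + h *\<^sub>R b)) has_real_derivative f' p) (at 0)"
    "\<forall>p\<in>wedge. ((\<lambda>h. g (p + h *\<^sub>R b)) has_real_derivative g' p) (at 0)"
    by blast
  then show ?case
    by (intro exI[of _ "\<lambda>p. f' p + g' p"]) (auto intro: moment_expr.moment_expr_add DERIV_add)
qed

lemma Ck_on_wedge_if_moment_expr:
  assumes "moment_expr g" "\<And>p. p \<in> wedge \<Longrightarrow> f p = g p"
  shows "Ck_on k wedge f"
  using assms
proof (induction k arbitrary: f g)
  case 0
  then show ?case
    using continuous_on_moment_expr continuous_on_cong by (metis Ck_on.simps(1))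
next
  case (Suc k)
  have "continuous_on wedge f"
    using continuous_on_moment_expr[OF Suc.prems(1)] continuous_on_cong Suc.prems(2) by metis
  moreover have "(\<forall>p\<in>wedge. (\<lambda>h. f (p + h *\<^sub>R b)) differentiable (at 0)) \<and> Ck_on k wedge (dirderiv f b)"
    if b: "b \<in> Basis" for b
  proof -
    obtain g' where g': "moment_expr g'"
      "\<And>p. p \<in> wedge \<Longrightarrow> ((\<lambda>h. g (p + h *\<^sub>R b)) has_real_derivative g' p) (at 0)"
      using moment_expr_partial[OF Suc.prems(1) b] by blast
    have f': "((\<lambda>h. f (p + h *\<^sub>R b)) has_real_derivative g' p) (at 0)" if p: "p \<in> wedge" for p
    proof (rule has_field_derivative_transform_within_open[OF g'(2)[OF p]])
      show "open ((\<lambda>h. p + h *\<^sub>R b) -` wedge)"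
        by (intro continuous_open_vimage open_wedge continuous_intros)
    qed (use p Suc.prems(2) in auto)
    have "dirderiv f b p = g' p" if "p \<in> wedge" for p
      unfolding dirderiv_def using f'[OF that] by (rule DERIV_imp_deriv)
    with Suc.IH[OF g'(1)] have "Ck_on k wedge (dirderiv f b)"
      by blast
    moreover have "\<forall>p\<in>wedge. (\<lambda>h. f (p + h *\<^sub>R b)) differentiable (at 0)"
      using f' real_differentiable_def by blast
    ultimately show ?thesis
      by blast
  qed
  ultimately show ?case
    by simp
qed

lemma smooth_on_wedge_if_moment_expr: "moment_expr f \<Longrightarrow> smooth_on wedge f"
  unfolding smooth_on_def using Ck_on_wedge_if_moment_expr by blast

section \<open>The wave equation\<close>

lemma dirderiv_moment_term_x:
  fixes \<psi> :: "'a::euclidean_space \<times> real \<Rightarrow> real"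
  assumes "smooth_on UNIV \<psi>" "e \<in> Basis"
  shows "dirderiv (\<lambda>z. moment_term \<psi> c k (z, t)) (e, 0) = (\<lambda>z. moment_term (dirderiv \<psi> (e, 0)) c k (z, t))"
proof
  fix z :: "'a \<times> real"
  obtain x y where "z = (x, y)"
    by fastforce
  then show "dirderiv (\<lambda>z. moment_term \<psi> c k (z, t)) (e, 0) z = moment_term (dirderiv \<psi> (e, 0)) c k (z, t)"
    unfolding dirderiv_def[of "\<lambda>z. moment_term \<psi> c k (z, t)"]
    using DERIV_imp_deriv[OF moment_term_has_derivative_x[OF assms]] by simp
qed

lemma moment_term_laplacian_x:
  fixes \<phi> :: "'a::euclidean_space \<times> real \<Rightarrow> real"
  assumes smooth: "smooth_on UNIV \<phi>" and harmonic: "\<And>p. laplacian \<phi> p = 0"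
  shows "(\<Sum>e\<in>Basis. dirderiv (dirderiv (\<lambda>z. moment_term \<phi> c k (z, t)) (e, 0)) (e, 0) (x, y))
         = - moment_term (dirderiv (dirderiv \<phi> (0, 1)) (0, 1)) c k ((x, y), t)"
proof -
  let ?\<phi>\<^sub>e\<^sub>e = "\<lambda>e. dirderiv (dirderiv \<phi> (e, 0)) (e, 0)"
  have smooth_ee: "smooth_on UNIV (?\<phi>\<^sub>e\<^sub>e e)" if "e \<in> Basis" for e
    using that smooth by (intro smooth_on_dirderiv) (auto simp: Basis_prod_def)
  have "(\<Sum>e\<in>Basis. dirderiv (dirderiv (\<lambda>z. moment_term \<phi> c k (z, t)) (e, 0)) (e, 0) (x, y))
      = (\<Sum>e\<in>Basis. moment_term (?\<phi>\<^sub>e\<^sub>e e) c k ((x, y), t))"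
    using smooth by (intro sum.cong) (auto simp: dirderiv_moment_term_x smooth_on_dirderiv Basis_prod_def)
  also have "\<dots> = c (y, t) * sine_moment (\<lambda>p. \<Sum>e\<in>Basis. ?\<phi>\<^sub>e\<^sub>e e p) k x (hyperbolic_radius y t)"
    using smooth_ee by (simp add: sum_distrib_left sine_moment_sum smooth_on_imp_continuous_on)
  also have "(\<lambda>p. \<Sum>e\<in>Basis. ?\<phi>\<^sub>e\<^sub>e e p) = (\<lambda>p. - dirderiv (dirderiv \<phi> (0, 1)) (0, 1) p)"
  proof
    fix p
    show "(\<Sum>e\<in>Basis. ?\<phi>\<^sub>e\<^sub>e e p) = - dirderiv (dirderiv \<phi> (0, 1)) (0, 1) p"
      using harmonic[of p] unfolding laplacian_prod_real by linarith
  qed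
  finally show ?thesis
    by (simp add: sine_moment_def)
qed

lemma moment_term_wave_equation:
  fixes \<phi> :: "'a::euclidean_space \<times> real \<Rightarrow> real" and a :: real
  assumes smooth: "smooth_on UNIV \<phi>" and harmonic: "\<And>p. laplacian \<phi> p = 0"
    and neumann: "\<And>x. dirderiv \<phi> (0, 1) (x, 0) = 0" and yt: "\<bar>t\<bar> < y"
  defines "W \<equiv> moment_term \<phi> (\<lambda>_. a) 0"
  shows "deriv (deriv (\<lambda>\<tau>. W ((x, y), \<tau>))) t - laplacian (\<lambda>z. W (z, t)) (x, y) = 0"
proof -
  define \<phi>\<^sub>y where "\<phi>\<^sub>y = dirderiv \<phi> (0, 1)"
  define r where "r = hyperbolic_radius y t"
  have "r > 0"
    using hyperbolic_radius_pos[OF yt] by (simp add: r_def)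
  have smooth_y: "smooth_on UNIV \<phi>\<^sub>y"
    unfolding \<phi>\<^sub>y_def using smooth by (rule smooth_on_dirderiv) (simp add: Basis_prod_def)
  have "((\<lambda>\<rho>. a * sine_moment \<phi> 0 x \<rho>) has_real_derivative a * sine_moment \<phi>\<^sub>y 1 x \<rho>) (at \<rho>)"
    and "((\<lambda>\<rho>. a * sine_moment \<phi>\<^sub>y 1 x \<rho>) has_real_derivative
           a * sine_moment (dirderiv \<phi>\<^sub>y (0, 1)) 2 x \<rho>) (at \<rho>)" for \<rho>
    using DERIV_cmult[OF sine_moment_has_derivative_snd[OF smooth]]
      DERIV_cmult[OF sine_moment_has_derivative_snd[OF smooth_y]]
    by (simp_all add: \<phi>\<^sub>y_def numeral_2_eq_2)
  from hyperbolic_radial_wave_operator[OF this yt]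
  have radial: "deriv (deriv (\<lambda>\<tau>. W ((x, y), \<tau>))) t - deriv (deriv (\<lambda>\<eta>. W ((x, \<eta>), t))) y
      = a * (- sine_moment (dirderiv \<phi>\<^sub>y (0, 1)) 2 x r - sine_moment \<phi>\<^sub>y 1 x r / r)"
    by (simp add: W_def r_def algebra_simps)
  let ?M = "\<lambda>k. sine_moment (dirderiv \<phi>\<^sub>y (0, 1)) k x r"
  have laplacian: "laplacian (\<lambda>z. W (z, t)) (x, y) = - a * ?M 0 + deriv (deriv (\<lambda>\<eta>. W ((x, \<eta>), t))) y"
    unfolding laplacian_prod_real dirderiv_snd_snd W_def moment_term_laplacian_x[OF smooth harmonic]
    by (simp add: r_def \<phi>\<^sub>y_def)
  have parts: "r * (?M 0 - ?M 2) = sine_moment \<phi>\<^sub>y 1 x r"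
    using sine_moment_by_parts[OF smooth_y] neumann by (simp add: \<phi>\<^sub>y_def)
  have "r * (deriv (deriv (\<lambda>\<tau>. W ((x, y), \<tau>))) t - laplacian (\<lambda>z. W (z, t)) (x, y))
      = r * (a * (- ?M 2 - sine_moment \<phi>\<^sub>y 1 x r / r)) + a * (r * ?M 0)"
    unfolding laplacian radial[symmetric] by (simp add: algebra_simps)
  also have "\<dots> = 0"
    unfolding parts[symmetric] using \<open>r > 0\<close> by (simp add: field_simps)
  finally show ?thesis
    using \<open>r > 0\<close> by simp
qed

theorem lemma2:
  fixes \<phi> :: "(real ^ 'm) \<times> real \<Rightarrow> real"
    and w :: "((real ^ 'm) \<times> real) \<times> real \<Rightarrow> real"
  assumes smooth: "smooth_on UNIV \<phi>"
    and harmonic: "\<And>p. laplacian \<phi> p = 0"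
    and neumann: "\<And>x. deriv (\<lambda>y. \<phi> (x, y)) 0 = 0"
    and w_def: "\<And>x y t. w ((x, y), t) =
        (1 / pi) * integral {0..pi/2} (\<lambda>s. \<phi> (x, sqrt (y\<^sup>2 - t\<^sup>2) * sin s))"
  shows "smooth_on {((x, y), t). y > \<bar>t\<bar>} w \<and>
    (\<forall>x y t. y > \<bar>t\<bar> \<longrightarrow>
       deriv (deriv (\<lambda>\<tau>. w ((x, y), \<tau>))) t - laplacian (\<lambda>z. w (z, t)) (x, y) = 0)"
proof
  have w_eq: "w = moment_term \<phi> (\<lambda>_. 1 / pi) 0"
    by (rule ext) (auto simp: moment_term_def w_def sine_moment_def hyperbolic_radius_def)
  show "smooth_on {((x, y), t). y > \<bar>t\<bar>} w"
    unfolding w_eq wedge_def[symmetric] using smooth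
    by (intro smooth_on_wedge_if_moment_expr moment_expr.intros wedge_coeff.intros)
  have "\<And>x. dirderiv \<phi> (0, 1) (x, 0) = 0"
    using neumann by (simp add: dirderiv_snd)
  then show "\<forall>x y t. y > \<bar>t\<bar> \<longrightarrow>
      deriv (deriv (\<lambda>\<tau>. w ((x, y), \<tau>))) t - laplacian (\<lambda>z. w (z, t)) (x, y) = 0"
    unfolding w_eq using moment_term_wave_equation[OF smooth harmonic] by blast
qed

end
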